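(* Let $\mathcal{D}$ be a domain with area $|\mathcal{D}|>0$, and suppose we have $n_1$ presence observations with feature vectors $x_i\in\mathbb{R}^p$ (indexed by $y_i=1$) and $n_0\ge1$ background observations with feature vectors $x_i\in\mathbb{R}^p$ (indexed by $y_i=0$). Define the numerical IPP log-likelihood $$\ell_{\mathrm{IPP}}(\alpha,\beta)=\sum_{i:y_i=1}\big(\alpha+\beta'x_i\big)-\frac{|\mathcal{D}|}{n_0}\sum_{i:y_i=0}e^{\alpha+\beta'x_i}-\log n_1!,$$ and, for a weight $W>0$, the weighted logistic regression log-likelihood $$\ell_{\mathrm{WLR}}(\eta,\beta)=\sum_{i:y_i=1}\big(\eta+\beta'x_i\big)-\sum_{i}W^{1-y_i}\log\big(1+e^{\eta+\beta'x_i}\big),$$ where the last sum runs over all $n_1+n_0$ observations. Let $J(\beta)$ be any convex penalty, and suppose $\ell_{\mathrm{IPP}}(\alpha,\beta)-J(\beta)$ has a unique maximizer $(\hat\alpha_{\mathrm{IPP}},\hat\beta_{\mathrm{IPP}})$. If, for each $W$, $(\hat\eta_W,\hat\beta_W)$ maximizes $\ell_{\mathrm{WLR}}(\eta,\beta)-J(\beta)$, then $\lim_{W\to\infty}\hat\beta_W=\hat\beta_{\mathrm{IPP}}$.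
   Context: $\ell_{\mathrm{WLR}}$ is the log-likelihood of logistic regression of $y_i$ on $x_i$ in which every background observation ($y_i=0$) receives case weight $W$ and every presence observation receives weight $1$. *)

theory Defs
  imports "HOL-Analysis.Analysis"
begin

text \<open>Presence observations: x1 i for i < n1 (y_i = 1).
      Background observations: x0 j for j < n0 (y_i = 0).
      Feature space R^p is real^'p; beta' x is the inner product.\<close>

definition ell_IPP ::
  "real \<Rightarrow> nat \<Rightarrow> nat \<Rightarrow> (nat \<Rightarrow> real^'p) \<Rightarrow> (nat \<Rightarrow> real^'p) \<Rightarrow> real \<Rightarrow> real^'p \<Rightarrow> real" where
  "ell_IPP areaD n1 n0 x1 x0 \<alpha> \<beta> =
     (\<Sum>i<n1. \<alpha> + \<beta> \<bullet> x1 i)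
     - areaD / real n0 * (\<Sum>j<n0. exp (\<alpha> + \<beta> \<bullet> x0 j))
     - ln (fact n1)"

text \<open>Weighted logistic regression log-likelihood: every background point gets
      case weight W = W^(1-0), every presence point weight 1 = W^(1-1).\<close>
definition ell_WLR ::
  "real \<Rightarrow> nat \<Rightarrow> nat \<Rightarrow> (nat \<Rightarrow> real^'p) \<Rightarrow> (nat \<Rightarrow> real^'p) \<Rightarrow> real \<Rightarrow> real^'p \<Rightarrow> real" where
  "ell_WLR W n1 n0 x1 x0 \<eta> \<beta> =
     (\<Sum>i<n1. \<eta> + \<beta> \<bullet> x1 i)
     - ((\<Sum>i<n1. ln (1 + exp (\<eta> + \<beta> \<bullet> x1 i)))
        + (\<Sum>j<n0. W * ln (1 + exp (\<eta> + \<beta> \<bullet> x0 j))))"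

end

theory Submission
  imports Defs
begin

text \<open>Shift the WLR intercept by \<open>k = ln (W n\<^sub>0 / |D|)\<close>, i.e. put \<open>\<eta> = \<alpha> - k\<close>.
  With \<open>\<epsilon> = e\<^sup>-\<^sup>k\<close> we have \<open>W \<epsilon> = |D| / n\<^sub>0\<close> and
  \<open>W log (1 + \<epsilon> e\<^sup>t) = (|D| / n\<^sub>0) e\<^sup>t + O(W \<epsilon>\<^sup>2)\<close>, so up to an additive constant the
  penalized WLR objective converges to the penalized IPP objective uniformly on bounded sets as
  \<open>W \<rightarrow> \<infinity>\<close>. On a sphere around the strict IPP maximizer the IPP objective stays a positive
  gap below its peak, and for large \<open>W\<close> so does the WLR objective. Since the WLR objective is
  concave, a maximizer outside the ball would make it at least its central value somewhere on
  the segment, hence on the sphere; so the WLR maximizers converge.\<close>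

lemma convex_on_sum_fun:
  assumes "finite I" "convex S" "\<And>i. i \<in> I \<Longrightarrow> convex_on S (f i)"
  shows "convex_on S (\<lambda>x. \<Sum>i\<in>I. f i x)"
  using assms(1,3)
proof (induction I rule: finite_induct)
  case empty
  then show ?case using assms(2) by (simp add: convex_on_const)
next
  case (insert i I)
  then show ?case by (simp add: convex_on_add)
qed

lemma convex_on_compose_affine:
  assumes "convex_on UNIV f" "linear L"
  shows "convex_on UNIV (\<lambda>z. f (L z + b))"
proof (rule convex_onI)
  fix t :: real and x y assume "0 < t" "t < 1"
  have "L ((1 - t) *\<^sub>R x + t *\<^sub>R y) + b = (1 - t) *\<^sub>R (L x + b) + t *\<^sub>R (L y + b)"
    by (simp only: linear_add[OF assms(2)] linear_scale[OF assms(2)]) (simp add: algebra_simps)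
  then show "f (L ((1 - t) *\<^sub>R x + t *\<^sub>R y) + b) \<le> (1 - t) * f (L x + b) + t * f (L y + b)"
    using convex_onD[OF assms(1), of t] \<open>0 < t\<close> \<open>t < 1\<close> by simp
qed simp

lemma convex_on_ln_one_plus_exp: "convex_on UNIV (\<lambda>t::real. ln (1 + exp t))"
proof (rule f''_ge0_imp_convex)
  fix t :: real
  show "((\<lambda>t. ln (1 + exp t)) has_real_derivative exp t / (1 + exp t)) (at t)"
    by (auto intro!: derivative_eq_intros simp: add_pos_pos)
  show "((\<lambda>t. exp t / (1 + exp t)) has_real_derivative exp t / (1 + exp t)^2) (at t)"
    using add_pos_pos[OF zero_less_one exp_gt_zero, of t]
    by (auto intro!: derivative_eq_intros simp: power2_eq_square field_simps)
  show "0 \<le> exp t / (1 + exp t)^2" by simp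
qed simp

lemma abs_ln_one_plus_minus_le_square:
  fixes y :: real
  assumes "0 \<le> y" "y \<le> 1"
  shows "\<bar>ln (1 + y) - y\<bar> \<le> y\<^sup>2"
  using ln_one_plus_pos_lower_bound[OF assms] ln_add_one_self_le_self[OF assms(1)] by simp

lemma sum_ln_one_plus_exp_error_le:
  fixes e W M :: real and s t :: "nat \<Rightarrow> real"
  assumes "e > 0" "W \<ge> 0" "e * exp M \<le> 1"
    and "\<And>i. i < n1 \<Longrightarrow> s i \<le> M" "\<And>j. j < n0 \<Longrightarrow> t j \<le> M"
  shows "\<bar>(\<Sum>i<n1. ln (1 + e * exp (s i))) + (\<Sum>j<n0. W * (ln (1 + e * exp (t j)) - e * exp (t j)))\<bar>
    \<le> e * (n1 * exp M + n0 * W * e * exp (2 * M))"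
proof -
  have small: "0 \<le> e * exp u" "e * exp u \<le> e * exp M" if "u \<le> M" for u
    using that assms(1) by auto
  have "\<bar>\<Sum>i<n1. ln (1 + e * exp (s i))\<bar> \<le> (\<Sum>i<n1. \<bar>ln (1 + e * exp (s i))\<bar>)"
    by (rule sum_abs)
  also have "\<dots> \<le> card {..<n1} * (e * exp M)"
  proof (rule sum_bounded_above)
    fix i assume "i \<in> {..<n1}"
    then have sM: "s i \<le> M" using assms(4) by simp
    show "\<bar>ln (1 + e * exp (s i))\<bar> \<le> e * exp M"
      using ln_add_one_self_le_self[OF small(1)[OF sM]] small[OF sM] by (simp add: add_increasing)
  qed
  finally have presence: "\<bar>\<Sum>i<n1. ln (1 + e * exp (s i))\<bar> \<le> n1 * (e * exp M)"
    by simp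
  have "\<bar>\<Sum>j<n0. W * (ln (1 + e * exp (t j)) - e * exp (t j))\<bar>
      \<le> (\<Sum>j<n0. \<bar>W * (ln (1 + e * exp (t j)) - e * exp (t j))\<bar>)"
    by (rule sum_abs)
  also have "\<dots> \<le> card {..<n0} * (W * (e * exp M)\<^sup>2)"
  proof (rule sum_bounded_above)
    fix j assume "j \<in> {..<n0}"
    then have tM: "t j \<le> M" using assms(5) by simp
    have "\<bar>ln (1 + e * exp (t j)) - e * exp (t j)\<bar> \<le> (e * exp (t j))\<^sup>2"
      using abs_ln_one_plus_minus_le_square small[OF tM] assms(3) by simp
    also have "\<dots> \<le> (e * exp M)\<^sup>2"
      using small[OF tM] by (intro power_mono) auto
    finally show "\<bar>W * (ln (1 + e * exp (t j)) - e * exp (t j))\<bar> \<le> W * (e * exp M)\<^sup>2"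
      using assms(2) by (simp add: abs_mult mult_left_mono)
  qed
  finally have background:
    "\<bar>\<Sum>j<n0. W * (ln (1 + e * exp (t j)) - e * exp (t j))\<bar> \<le> n0 * (W * (e * exp M)\<^sup>2)"
    by simp
  have "n1 * (e * exp M) + n0 * (W * (e * exp M)\<^sup>2) = e * (n1 * exp M + n0 * W * e * exp (2 * M))"
    by (simp add: power2_eq_square algebra_simps flip: exp_add)
  then show ?thesis
    using abs_triangle_ineq presence background by (smt (verit))
qed

lemma continuous_on_sphere_strict_max_gap:
  fixes g :: "'a::euclidean_space \<Rightarrow> real"
  assumes "continuous_on (sphere c r) g" "\<And>p. p \<in> sphere c r \<Longrightarrow> g p < g c"
  shows "\<exists>d>0. \<forall>p\<in>sphere c r. g p \<le> g c - d"
proof (cases "sphere c r = {}")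
  case True
  then show ?thesis by (intro exI[of _ 1]) auto
next
  case False
  then obtain p0 where "p0 \<in> sphere c r" "\<And>p. p \<in> sphere c r \<Longrightarrow> g p \<le> g p0"
    using continuous_attains_sup[OF compact_sphere False assms(1)] by blast
  then show ?thesis
    using assms(2) by (intro exI[of _ "g c - g p0"]) auto
qed

lemma concave_on_maximizer_in_ball:
  fixes h :: "'a::real_normed_vector \<Rightarrow> real"
  assumes "concave_on UNIV h" "\<And>z. h z \<le> h m" "r > 0" "\<And>p. p \<in> sphere c r \<Longrightarrow> h p < h c"
  shows "dist m c < r"
proof (rule ccontr)
  assume "\<not> dist m c < r"
  then have far: "r \<le> dist m c" by simp
  define u where "u = r / dist m c"
  have u: "0 \<le> u" "u \<le> 1"
    unfolding u_def using assms(3) far by (auto simp: divide_le_eq)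
  define p where "p = (1 - u) *\<^sub>R c + u *\<^sub>R m"
  have "dist p c = u * dist m c"
    unfolding p_def dist_norm using u by (simp add: algebra_simps flip: scaleR_diff_right)
  then have "p \<in> sphere c r"
    unfolding u_def using assms(3) far by (simp add: dist_commute split: if_splits)
  then have "h p < h c" by (rule assms(4))
  moreover have "h c \<le> (1 - u) * h c + u * h m"
    using assms(2)[of c] u by (simp add: algebra_simps mult_left_mono)
  moreover have "(1 - u) * h c + u * h m \<le> h p"
    unfolding p_def using concave_onD[OF assms(1) u] by simp
  ultimately show False by linarith
qed

lemma concave_maximizers_tendsto:
  fixes g :: "'a::euclidean_space \<Rightarrow> real" and h :: "'i \<Rightarrow> 'a \<Rightarrow> real"
  assumes "continuous_on UNIV g" "\<And>z. z \<noteq> c \<Longrightarrow> g z < g c"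
    and "\<forall>\<^sub>F i in F. concave_on UNIV (h i) \<and> (\<forall>z. h i z \<le> h i (m i))"
    and "\<And>r \<epsilon>. \<epsilon> > 0 \<Longrightarrow> \<forall>\<^sub>F i in F. \<forall>z\<in>cball c r. \<bar>h i z + K i - g z\<bar> < \<epsilon>"
  shows "(m \<longlongrightarrow> c) F"
proof (rule tendstoI)
  fix r :: real assume "r > 0"
  then have "g p < g c" if "p \<in> sphere c r" for p
    using that assms(2) by auto
  moreover have "continuous_on (sphere c r) g"
    using continuous_on_subset[OF assms(1)] by simp
  ultimately obtain d where "d > 0" and gap: "\<And>p. p \<in> sphere c r \<Longrightarrow> g p \<le> g c - d"
    using continuous_on_sphere_strict_max_gap by blast
  have "\<forall>\<^sub>F i in F. \<forall>z\<in>cball c r. \<bar>h i z + K i - g z\<bar> < d / 2"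
    using \<open>d > 0\<close> by (intro assms(4)) simp
  with assms(3) show "\<forall>\<^sub>F i in F. dist (m i) c < r"
  proof eventually_elim
    case (elim i)
    have "h i p < h i c" if "p \<in> sphere c r" for p
    proof -
      have "c \<in> cball c r" "p \<in> cball c r" using that \<open>r > 0\<close> by auto
      then have "\<bar>h i c + K i - g c\<bar> < d / 2" "\<bar>h i p + K i - g p\<bar> < d / 2"
        using elim by blast+
      then show ?thesis using gap[OF that] by linarith
    qed
    with elim \<open>r > 0\<close> show ?case by (intro concave_on_maximizer_in_ball[of "h i"]) auto
  qed
qed

lemma abs_predictor_le:
  fixes \<beta> x :: "'a::real_inner"
  shows "\<bar>\<alpha> + \<beta> \<bullet> x\<bar> \<le> norm (\<alpha>, \<beta>) * (1 + norm x)"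
proof -
  have "\<bar>\<beta> \<bullet> x\<bar> \<le> norm (\<alpha>, \<beta>) * norm x"
    using Cauchy_Schwarz_ineq2[of \<beta> x] norm_snd_le[of \<beta> \<alpha>] by (meson mult_right_mono norm_ge_zero order_trans)
  moreover have "\<bar>\<alpha>\<bar> \<le> norm (\<alpha>, \<beta>)" using norm_fst_le[of \<alpha> \<beta>] by simp
  ultimately show ?thesis by (simp add: algebra_simps)
qed

lemma concave_on_penalized_ell_WLR:
  fixes x1 x0 :: "nat \<Rightarrow> real^'p"
  assumes "W \<ge> 0" "convex_on UNIV J"
  shows "concave_on UNIV (\<lambda>z. ell_WLR W n1 n0 x1 x0 (fst z - k) (snd z) - J (snd z))"
proof -
  define L where "L x z = fst z + snd z \<bullet> x" for x :: "real^'p" and z :: "real \<times> (real^'p)"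
  have lin: "linear (L x)" for x
    unfolding L_def linear_iff by (simp add: inner_add_left algebra_simps)
  have phi: "convex_on UNIV (\<lambda>t::real. ln (1 + exp t) - t)"
    by (intro convex_on_diff convex_on_ln_one_plus_exp) (simp add: concave_on_ident)
  have "convex_on UNIV (\<lambda>z. (\<Sum>i<n1. ln (1 + exp (L (x1 i) z + - k)) - (L (x1 i) z + - k))
      + (\<Sum>j<n0. W * ln (1 + exp (L (x0 j) z + - k))) + J (snd z + 0))"
    by (intro convex_on_add convex_on_sum_fun convex_on_cmul assms convex_on_compose_affine[OF phi lin]
        convex_on_compose_affine[OF convex_on_ln_one_plus_exp lin] convex_on_compose_affine[OF assms(2)] linear_snd) auto
  then show ?thesis
    unfolding concave_on_def ell_WLR_def L_def
    by (simp add: sum_subtractf sum.distrib) (simp add: algebra_simps)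
qed

lemma ell_WLR_shift_minus_ell_IPP:
  fixes x1 x0 :: "nat \<Rightarrow> real^'p"
  assumes "W * exp (- k) = D / real n0"
  shows "ell_WLR W n1 n0 x1 x0 (\<alpha> - k) \<beta> + n1 * k - ln (fact n1) - ell_IPP D n1 n0 x1 x0 \<alpha> \<beta>
     = - ((\<Sum>i<n1. ln (1 + exp (- k) * exp (\<alpha> + \<beta> \<bullet> x1 i)))
       + (\<Sum>j<n0. W * (ln (1 + exp (- k) * exp (\<alpha> + \<beta> \<bullet> x0 j)) - exp (- k) * exp (\<alpha> + \<beta> \<bullet> x0 j))))"
proof -
  have "exp (\<alpha> - k + \<beta> \<bullet> x) = exp (- k) * exp (\<alpha> + \<beta> \<bullet> x)" for x :: "real^'p"
    by (simp flip: exp_add)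
  then show ?thesis
    unfolding ell_WLR_def ell_IPP_def
    by (simp add: sum.distrib sum_subtractf sum_distrib_left right_diff_distrib
        mult.assoc[symmetric] assms algebra_simps)
qed

lemma ell_WLR_shift_uniform_approx_ell_IPP:
  fixes x1 x0 :: "nat \<Rightarrow> real^'p" and S :: "(real \<times> (real^'p)) set"
  assumes "D > 0" "n0 \<ge> 1" "bounded S" "\<epsilon> > 0"
  shows "\<forall>\<^sub>F W in at_top. \<forall>z\<in>S.
    \<bar>ell_WLR W n1 n0 x1 x0 (fst z - ln (W * n0 / D)) (snd z) + n1 * ln (W * n0 / D) - ln (fact n1)
      - ell_IPP D n1 n0 x1 x0 (fst z) (snd z)\<bar> < \<epsilon>"
    (is "\<forall>\<^sub>F W in at_top. \<forall>z\<in>S. \<bar>?err W z\<bar> < \<epsilon>")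
proof -
  obtain R where R: "\<And>z. z \<in> S \<Longrightarrow> norm z \<le> R"
    using assms(3) bounded_iff by blast
  define X where "X = (\<Sum>i<n1. norm (x1 i)) + (\<Sum>j<n0. norm (x0 j))"
  define M where "M = \<bar>R\<bar> * (1 + X)"
  have X0: "0 \<le> X" unfolding X_def by (intro add_nonneg_nonneg sum_nonneg) auto
  have pred: "fst z + snd z \<bullet> x \<le> M" if "z \<in> S" "norm x \<le> X" for z x
  proof -
    have "\<bar>fst z + snd z \<bullet> x\<bar> \<le> norm z * (1 + norm x)"
      using abs_predictor_le[of "fst z" "snd z" x] by simp
    also have "\<dots> \<le> M"
      unfolding M_def using R[OF that(1)] that(2) by (intro mult_mono) auto
    finally show ?thesis by simp
  qed
  have "norm (x1 i) \<le> X" if "i < n1" for i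
    unfolding X_def using that by (intro add_increasing2 member_le_sum sum_nonneg) auto
  moreover have "norm (x0 j) \<le> X" if "j < n0" for j
    unfolding X_def using that by (intro add_increasing member_le_sum sum_nonneg) auto
  ultimately have pred1: "\<And>z i. z \<in> S \<Longrightarrow> i < n1 \<Longrightarrow> fst z + snd z \<bullet> x1 i \<le> M"
    and pred0: "\<And>z j. z \<in> S \<Longrightarrow> j < n0 \<Longrightarrow> fst z + snd z \<bullet> x0 j \<le> M"
    using pred by auto
  define C where "C = n1 * exp M + D * exp (2 * M)"
  have C0: "0 \<le> C" unfolding C_def using assms(1) by simp
  have n0: "real n0 > 0" using assms(2) by simp
  have "((\<lambda>W::real. D / (W * n0)) \<longlongrightarrow> 0) at_top"
    by (intro tendsto_divide_0[OF tendsto_const] filterlim_at_top_imp_at_infinity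
        filterlim_at_top_mult_tendsto_pos[OF tendsto_const n0] filterlim_ident)
  then have "\<forall>\<^sub>F W::real in at_top. D / (W * n0) < min (1 / exp M) (\<epsilon> / (C + 1))"
    using assms(4) C0 by (intro order_tendstoD) auto
  with eventually_gt_at_top[of 0] show ?thesis
  proof eventually_elim
    case (elim W)
    define e where "e = D / (W * n0)"
    have e: "e > 0" "exp (- ln (W * n0 / D)) = e" "W * e = D / n0" "n0 * W * e = D"
      unfolding e_def using elim n0 assms(1) by (auto simp: exp_minus)
    have eM: "e * exp M \<le> 1" using elim unfolding e_def by (simp add: field_simps)
    have "e * C < \<epsilon>"
    proof -
      have "e * (C + 1) < \<epsilon>" using elim C0 unfolding e_def by (simp add: field_simps)
      then show ?thesis using e(1) by (smt (verit) mult_left_mono)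
    qed
    show ?case
    proof
      fix z assume "z \<in> S"
      have "\<bar>?err W z\<bar> \<le> e * (n1 * exp M + n0 * W * e * exp (2 * M))"
        unfolding ell_WLR_shift_minus_ell_IPP[OF e(3)[folded e(2)]] e(2) abs_minus_cancel
        using sum_ln_one_plus_exp_error_le[OF e(1) _ eM] pred1[OF \<open>z \<in> S\<close>] pred0[OF \<open>z \<in> S\<close>] elim
        by simp
      also have "\<dots> = e * C" unfolding C_def using e(4) by (simp add: mult.assoc)
      finally show "\<bar>?err W z\<bar> < \<epsilon>" using \<open>e * C < \<epsilon>\<close> by linarith
    qed
  qed
qed

theorem proposition2:
  fixes areaD :: real and n1 n0 :: nat
    and x1 x0 :: "nat \<Rightarrow> real^'p"
    and J :: "real^'p \<Rightarrow> real"
    and \<alpha>hat :: real and \<beta>hat :: "real^'p"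
    and \<eta>W :: "real \<Rightarrow> real" and \<beta>W :: "real \<Rightarrow> real^'p"
  assumes "areaD > 0" and "n0 \<ge> 1"
    and "convex_on UNIV J"
    and "\<forall>\<alpha> \<beta>. (\<alpha>, \<beta>) \<noteq> (\<alpha>hat, \<beta>hat) \<longrightarrow>
           ell_IPP areaD n1 n0 x1 x0 \<alpha> \<beta> - J \<beta> < ell_IPP areaD n1 n0 x1 x0 \<alpha>hat \<beta>hat - J \<beta>hat"
    and "\<forall>W>0. \<forall>\<eta> \<beta>. ell_WLR W n1 n0 x1 x0 \<eta> \<beta> - J \<beta>
           \<le> ell_WLR W n1 n0 x1 x0 (\<eta>W W) (\<beta>W W) - J (\<beta>W W)"
  shows "(\<beta>W \<longlongrightarrow> \<beta>hat) at_top"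
proof -
  define k where "k W = ln (W * n0 / areaD)" for W :: real
  define g where "g z = ell_IPP areaD n1 n0 x1 x0 (fst z) (snd z) - J (snd z)" for z
  define h where "h W z = ell_WLR W n1 n0 x1 x0 (fst z - k W) (snd z) - J (snd z)" for W z
  have "((\<lambda>W. (\<eta>W W + k W, \<beta>W W)) \<longlongrightarrow> (\<alpha>hat, \<beta>hat)) at_top"
  proof (rule concave_maximizers_tendsto[where g = g and h = h and K = "\<lambda>W. n1 * k W - ln (fact n1)"])
    have "continuous_on UNIV (\<lambda>z::real \<times> (real^'p). J (snd z))"
      by (rule continuous_on_compose2[OF convex_on_continuous[OF open_UNIV assms(3)]])
        (auto intro: continuous_intros)
    then show "continuous_on UNIV g"
      unfolding g_def ell_IPP_def by (intro continuous_intros)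
    show "g z < g (\<alpha>hat, \<beta>hat)" if "z \<noteq> (\<alpha>hat, \<beta>hat)" for z
      using assms(4) that unfolding g_def by (cases z) auto
    show "\<forall>\<^sub>F W in at_top. concave_on UNIV (h W) \<and> (\<forall>z. h W z \<le> h W (\<eta>W W + k W, \<beta>W W))"
      using eventually_gt_at_top[of 0]
    proof eventually_elim
      case (elim W)
      then show ?case
        using concave_on_penalized_ell_WLR[OF _ assms(3)] assms(5) unfolding h_def by simp
    qed
    show "\<forall>\<^sub>F W in at_top. \<forall>z\<in>cball (\<alpha>hat, \<beta>hat) r. \<bar>h W z + (n1 * k W - ln (fact n1)) - g z\<bar> < \<epsilon>"
      if "\<epsilon> > 0" for r \<epsilon>
      using ell_WLR_shift_uniform_approx_ell_IPP[OF assms(1,2) bounded_cball[of "(\<alpha>hat, \<beta>hat)" r] that]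
      unfolding h_def g_def k_def by (simp add: add_diff_eq)
  qed
  from tendsto_snd[OF this] show ?thesis by simp
qed

end
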